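(* Let $G$ be a finitely generated group, $p$ a prime, $x\in G$, and $k\ge 0$ an integer. Then $RG_p\big(G/\langle\langle x^{p^k}\rangle\rangle\big)\ge RG_p(G)-\frac{1}{p^k}$.
   Context: $\langle\langle y\rangle\rangle$ denotes the normal closure of $y$ in $G$. For a group $A$, $d(A)$ is the minimal number of generators and $d_p(A)=d\big(A/[A,A]A^p\big)$. For a finitely generated group $G$, $RG_p(G)=\inf_H\frac{d_p(H)-1}{[G:H]}$, the infimum over normal subgroups $H\trianglelefteq G$ of $p$-power index. *)

theory Defs
  imports "HOL-Algebra.Algebra" "HOL-Computational_Algebra.Primes" Complex_Main
begin

definition fin_gen :: "('a, 'b) monoid_scheme \<Rightarrow> bool" where
  "fin_gen G \<longleftrightarrow> (\<exists>S. finite S \<and> S \<subseteq> carrier G \<and> generate G S = carrier G)"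

definition min_gens :: "('a, 'b) monoid_scheme \<Rightarrow> nat" where
  "min_gens A = (LEAST n. \<exists>S. finite S \<and> S \<subseteq> carrier A \<and> card S = n \<and> generate A S = carrier A)"

definition comm_pow_subgroup :: "('a, 'b) monoid_scheme \<Rightarrow> nat \<Rightarrow> 'a set" where
  "comm_pow_subgroup A p =
     generate A (derived_set A (carrier A) \<union> {a [^]\<^bsub>A\<^esub> p | a. a \<in> carrier A})"

definition d_p :: "('a, 'b) monoid_scheme \<Rightarrow> nat \<Rightarrow> nat" where
  "d_p A p = min_gens (A Mod comm_pow_subgroup A p)"

definition normal_closure :: "('a, 'b) monoid_scheme \<Rightarrow> 'a set \<Rightarrow> 'a set" where
  "normal_closure G S =
     generate G {g \<otimes>\<^bsub>G\<^esub> y \<otimes>\<^bsub>G\<^esub> inv\<^bsub>G\<^esub> g | g y. g \<in> carrier G \<and> y \<in> S}"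

definition p_power_index :: "('a, 'b) monoid_scheme \<Rightarrow> nat \<Rightarrow> 'a set \<Rightarrow> bool" where
  "p_power_index G p H \<longleftrightarrow> finite (rcosets\<^bsub>G\<^esub> H) \<and> (\<exists>n. card (rcosets\<^bsub>G\<^esub> H) = p ^ n)"

definition RG_p :: "('a, 'b) monoid_scheme \<Rightarrow> nat \<Rightarrow> real" where
  "RG_p G p = Inf {(real (d_p (G\<lparr>carrier := H\<rparr>) p) - 1) / real (card (rcosets\<^bsub>G\<^esub> H)) | H.
                    H \<lhd> G \<and> p_power_index G p H}"

end

theory Submission
  imports Defs
begin

text \<open>
  Let \<open>N\<close> be the normal closure of \<open>y = x^(p^k)\<close> and \<open>K\<close> a normal subgroup of
  \<open>p\<close>-power index in \<open>G/N\<close>. Its preimage \<open>L\<close> in \<open>G\<close> has the same index and maps onto \<open>K\<close>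
  with kernel \<open>N\<close>, so \<open>d_p(L) \<le> d_p(K) + t\<close> as soon as \<open>N\<close> is generated modulo
  \<open>[L,L]L^p\<close> by \<open>t\<close> elements of \<open>L\<close>. If the image of \<open>x\<close> in \<open>G/L\<close> has order \<open>p^k\<close>, conjugates of \<open>y\<close> by elements of
  one coset of \<open>\<langle>xL\<rangle>\<close> in \<open>G/L\<close> agree modulo \<open>[L,L]\<close>, so \<open>t = [G:L]/p^k\<close> suffices;
  otherwise some \<open>x^(p^i)\<close> with \<open>i < k\<close> lies in \<open>L\<close>, every conjugate of \<open>y\<close> is a \<open>p\<close>-th
  power in \<open>L\<close>, and \<open>t = 0\<close>. Dividing by \<open>[G:L]\<close> gives the bound for each \<open>K\<close>.
\<close>

lemma min_gens_le_card:
  assumes "finite S" "S \<subseteq> carrier A" "generate A S = carrier A"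
  shows "min_gens A \<le> card S"
  unfolding min_gens_def by (rule Least_le) (use assms in blast)

lemma fin_gen_obtains_min_generators:
  assumes "fin_gen A"
  obtains S where "finite S" "S \<subseteq> carrier A" "card S = min_gens A" "generate A S = carrier A"
proof -
  from assms obtain S where "finite S" "S \<subseteq> carrier A" "generate A S = carrier A"
    unfolding fin_gen_def by blast
  then have "\<exists>n S. finite S \<and> S \<subseteq> carrier A \<and> card S = n \<and> generate A S = carrier A"
    by blast
  then have "\<exists>S. finite S \<and> S \<subseteq> carrier A \<and> card S = min_gens A \<and> generate A S = carrier A"
    unfolding min_gens_def by (rule LeastI_ex)
  with that show thesis by blast
qed

text \<open>The minimal number of generators of a group that is not finitely generated is the junk
  value \<open>LEAST n. False\<close>, the same for all such groups.\<close>

lemma min_gens_not_fin_gen: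
  assumes "\<not> fin_gen A"
  shows "min_gens A = (LEAST n. False)"
  using assms unfolding min_gens_def fin_gen_def by meson

lemma (in group) generate_Un_one:
  assumes "S \<subseteq> carrier G"
  shows "generate G (S \<union> {\<one>}) = generate G S"
proof (rule equalityI)
  have "S \<union> {\<one>} \<subseteq> generate G S"
    using generate.incl[of _ S G] generate.one[of G S] by blast
  then show "generate G (S \<union> {\<one>}) \<subseteq> generate G S"
    by (rule generate_subgroup_incl[OF _ generate_is_subgroup[OF assms]])
  show "generate G S \<subseteq> generate G (S \<union> {\<one>})"
    by (rule mono_generate) (rule Un_upper1)
qed

lemma (in group_hom) subgroup_eq_carrier_of_image:
  assumes "subgroup J G" "kernel G H h \<subseteq> J" "h ` J = carrier H"
  shows "J = carrier G"
proof
  show "J \<subseteq> carrier G" using assms(1) by (rule subgroup.subset)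
  show "carrier G \<subseteq> J"
  proof
    fix a assume a: "a \<in> carrier G"
    then have "h a \<in> h ` J" using assms(3) by simp
    then obtain c where c: "c \<in> J" "h a = h c" by (auto simp: image_iff)
    have cG: "c \<in> carrier G" using assms(1) c(1) by (rule subgroup.mem_carrier)
    have "a \<otimes>\<^bsub>G\<^esub> inv\<^bsub>G\<^esub> c \<in> kernel G H h"
      using a cG c(2) by (simp add: kernel_def)
    then have "a \<otimes>\<^bsub>G\<^esub> inv\<^bsub>G\<^esub> c \<otimes>\<^bsub>G\<^esub> c \<in> J"
      using assms(2) c(1) by (blast intro: subgroup.m_closed[OF assms(1)])
    then show "a \<in> J" using a cG by (simp add: G.m_assoc)
  qed
qed

context normal
begin

lemma rcos_group_hom: "group_hom G (G Mod H) ((#>) H)"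
  unfolding group_hom_def group_hom_axioms_def
  using is_group factorgroup_is_group r_coset_hom_Mod by (intro conjI)

lemma rcos_eq_self_iff:
  assumes "a \<in> carrier G"
  shows "H #> a = H \<longleftrightarrow> a \<in> H"
  using rcos_self[OF assms subgroup_axioms] rcos_const[OF is_group] by metis

lemma kernel_rcos: "kernel G (G Mod H) ((#>) H) = H"
  unfolding kernel_def one_FactGroup using rcos_eq_self_iff subset by blast

lemma generate_FactGroup_rcos_image:
  assumes "S \<subseteq> carrier G"
  shows "generate (G Mod H) ((#>) H ` S) = (#>) H ` generate G (S \<union> H)"
proof -
  interpret q: group_hom G "G Mod H" "(#>) H" by (rule rcos_group_hom)
  have "(#>) H ` H = (\<lambda>_. H) ` H"
    by (rule image_cong[OF refl rcos_const[OF is_group]])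
  also have "\<dots> = {\<one>\<^bsub>G Mod H\<^esub>}"
    using image_constant[OF subgroup.one_closed[OF subgroup_axioms], of H] by simp
  finally have "(#>) H ` (S \<union> H) = (#>) H ` S \<union> {\<one>\<^bsub>G Mod H\<^esub>}"
    by (simp only: image_Un)
  moreover have "S \<union> H \<subseteq> carrier G"
    using assms subset by (rule Un_least)
  ultimately have "(#>) H ` generate G (S \<union> H) = generate (G Mod H) ((#>) H ` S \<union> {\<one>\<^bsub>G Mod H\<^esub>})"
    using q.generate_img by metis
  also have "\<dots> = generate (G Mod H) ((#>) H ` S)"
    by (rule q.H.generate_Un_one) (use assms in \<open>simp add: carrier_FactGroup image_mono\<close>)
  finally show ?thesis by simp
qed

lemma generate_Un_eq_carrier_iff:
  assumes "S \<subseteq> carrier G"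
  shows "generate G (S \<union> H) = carrier G \<longleftrightarrow>
         generate (G Mod H) ((#>) H ` S) = carrier (G Mod H)"
proof
  assume "generate G (S \<union> H) = carrier G"
  then show "generate (G Mod H) ((#>) H ` S) = carrier (G Mod H)"
    using generate_FactGroup_rcos_image[OF assms] by (simp add: carrier_FactGroup)
next
  assume "generate (G Mod H) ((#>) H ` S) = carrier (G Mod H)"
  then have img: "(#>) H ` generate G (S \<union> H) = carrier (G Mod H)"
    using generate_FactGroup_rcos_image[OF assms] by simp
  have "S \<union> H \<subseteq> carrier G" using assms subset by (rule Un_least)
  then have "subgroup (generate G (S \<union> H)) G" by (rule generate_is_subgroup)
  moreover have "kernel G (G Mod H) ((#>) H) \<subseteq> generate G (S \<union> H)"
    unfolding kernel_rcos using generate.incl[of _ "S \<union> H" G] by blast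
  ultimately show "generate G (S \<union> H) = carrier G"
    by (rule group_hom.subgroup_eq_carrier_of_image[OF rcos_group_hom _ _ img])
qed

lemma fin_gen_FactGroup_min_gens_le:
  assumes "finite S" "S \<subseteq> carrier G" "generate G (S \<union> H) = carrier G"
  shows "fin_gen (G Mod H)" and "min_gens (G Mod H) \<le> card S"
proof -
  have gen: "generate (G Mod H) ((#>) H ` S) = carrier (G Mod H)"
    using assms(3) generate_Un_eq_carrier_iff[OF assms(2)] by simp
  moreover have sub: "(#>) H ` S \<subseteq> carrier (G Mod H)"
    using assms(2) by (simp add: carrier_FactGroup image_mono)
  ultimately show "fin_gen (G Mod H)"
    unfolding fin_gen_def using assms(1) by blast
  have "min_gens (G Mod H) \<le> card ((#>) H ` S)"
    using assms(1) sub gen by (intro min_gens_le_card) simp_all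
  also have "\<dots> \<le> card S" using assms(1) by (rule card_image_le)
  finally show "min_gens (G Mod H) \<le> card S" .
qed

lemma FactGroup_obtains_lifted_min_generators:
  assumes "fin_gen (G Mod H)"
  obtains S where "finite S" "S \<subseteq> carrier G" "card S = min_gens (G Mod H)"
    "generate G (S \<union> H) = carrier G"
proof -
  obtain T where T: "finite T" "T \<subseteq> carrier (G Mod H)" "card T = min_gens (G Mod H)"
    "generate (G Mod H) T = carrier (G Mod H)"
    using assms by (rule fin_gen_obtains_min_generators)
  obtain S where S: "S \<subseteq> carrier G" "inj_on ((#>) H) S" "T = (#>) H ` S"
    using T(2) unfolding carrier_FactGroup subset_image_inj by blast
  have "finite S" using S(2,3) T(1) by (simp add: finite_image_iff)
  moreover have "card S = min_gens (G Mod H)" using S(2,3) T(3) by (simp add: card_image)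
  moreover have "generate G (S \<union> H) = carrier G"
    using T(4) S(3) generate_Un_eq_carrier_iff[OF S(1)] by simp
  ultimately show thesis using S(1) that by blast
qed

end

lemma (in group_hom) image_derived_set:
  assumes "K \<subseteq> carrier G"
  shows "h ` derived_set G K = derived_set H (h ` K)"
proof -
  have hom_comm: "h (a \<otimes>\<^bsub>G\<^esub> b \<otimes>\<^bsub>G\<^esub> inv\<^bsub>G\<^esub> a \<otimes>\<^bsub>G\<^esub> inv\<^bsub>G\<^esub> b) =
        h a \<otimes>\<^bsub>H\<^esub> h b \<otimes>\<^bsub>H\<^esub> inv\<^bsub>H\<^esub> h a \<otimes>\<^bsub>H\<^esub> inv\<^bsub>H\<^esub> h b"
    if "a \<in> K" "b \<in> K" for a b
    using that assms by (simp add: subsetD)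
  have "h ` derived_set G K =
    (\<Union>a\<in>K. \<Union>b\<in>K. {h (a \<otimes>\<^bsub>G\<^esub> b \<otimes>\<^bsub>G\<^esub> inv\<^bsub>G\<^esub> a \<otimes>\<^bsub>G\<^esub> inv\<^bsub>G\<^esub> b)})"
    by (simp add: image_UN)
  also have "\<dots> = (\<Union>a\<in>K. \<Union>b\<in>K. {h a \<otimes>\<^bsub>H\<^esub> h b \<otimes>\<^bsub>H\<^esub> inv\<^bsub>H\<^esub> h a \<otimes>\<^bsub>H\<^esub> inv\<^bsub>H\<^esub> h b})"
    by (simp add: hom_comm)
  also have "\<dots> = derived_set H (h ` K)"
    by simp
  finally show ?thesis .
qed

lemma (in group_hom) image_nat_pow_set:
  assumes "K \<subseteq> carrier G"
  shows "h ` {a [^]\<^bsub>G\<^esub> n | a. a \<in> K} = {b [^]\<^bsub>H\<^esub> (n::nat) | b. b \<in> h ` K}"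
proof -
  have "h ` (\<lambda>a. a [^]\<^bsub>G\<^esub> n) ` K = (\<lambda>a. h a [^]\<^bsub>H\<^esub> n) ` K"
    unfolding image_image by (rule image_cong) (use assms in \<open>auto simp: subsetD hom_nat_pow\<close>)
  then show ?thesis by (simp add: Setcompr_eq_image image_image)
qed

lemma comm_pow_subgroup_image:
  assumes "group_hom A B f" "f ` carrier A = carrier B"
  shows "f ` comm_pow_subgroup A p = comm_pow_subgroup B p"
proof -
  interpret f: group_hom A B f by fact
  have "derived_set A (carrier A) \<union> {a [^]\<^bsub>A\<^esub> p | a. a \<in> carrier A} \<subseteq> carrier A"
    by (auto simp: f.G.derived_set_in_carrier)
  then have "f ` comm_pow_subgroup A p =
      generate B (f ` derived_set A (carrier A) \<union> f ` {a [^]\<^bsub>A\<^esub> p | a. a \<in> carrier A})"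
    unfolding comm_pow_subgroup_def image_Un[symmetric] by (rule f.generate_img[symmetric])
  also have "\<dots> = comm_pow_subgroup B p"
    unfolding comm_pow_subgroup_def f.image_derived_set[OF subset_refl]
      f.image_nat_pow_set[OF subset_refl] assms(2) ..
  finally show ?thesis .
qed

lemma (in group) inv_m_cancel_left [simp]:
  "x \<in> carrier G \<Longrightarrow> y \<in> carrier G \<Longrightarrow> inv x \<otimes> (x \<otimes> y) = y"
  by (simp flip: m_assoc)

lemma (in group) m_inv_cancel_left [simp]:
  "x \<in> carrier G \<Longrightarrow> y \<in> carrier G \<Longrightarrow> x \<otimes> (inv x \<otimes> y) = y"
  by (simp flip: m_assoc)

lemma (in group) conjugation_group_hom:
  assumes "g \<in> carrier G"
  shows "group_hom G G (\<lambda>h. g \<otimes> h \<otimes> inv g)"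
proof -
  have "(\<lambda>h. g \<otimes> h \<otimes> inv g) \<in> hom G G"
    using assms by (intro homI) (simp_all add: m_assoc)
  then show ?thesis
    by (simp add: group_hom_def group_hom_axioms_def is_group)
qed

lemma (in group) conjugation_image:
  assumes "g \<in> carrier G"
  shows "(\<lambda>h. g \<otimes> h \<otimes> inv g) ` carrier G = carrier G"
proof (intro equalityI subsetI)
  fix a assume a: "a \<in> carrier G"
  then have "a = g \<otimes> (inv g \<otimes> a \<otimes> g) \<otimes> inv g" using assms by (simp add: m_assoc)
  then show "a \<in> (\<lambda>h. g \<otimes> h \<otimes> inv g) ` carrier G" using a assms by blast
qed (use assms in auto)

lemma comm_pow_subgroup_normal:
  assumes "group A"
  shows "comm_pow_subgroup A p \<lhd> A"
proof -
  interpret group A by fact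
  have "derived_set A (carrier A) \<union> {a [^]\<^bsub>A\<^esub> p | a. a \<in> carrier A} \<subseteq> carrier A"
    by (auto simp: derived_set_in_carrier)
  then have "subgroup (comm_pow_subgroup A p) A"
    unfolding comm_pow_subgroup_def by (rule generate_is_subgroup)
  moreover have "g \<otimes>\<^bsub>A\<^esub> h \<otimes>\<^bsub>A\<^esub> inv\<^bsub>A\<^esub> g \<in> comm_pow_subgroup A p"
    if "g \<in> carrier A" "h \<in> comm_pow_subgroup A p" for g h
    using comm_pow_subgroup_image[OF conjugation_group_hom conjugation_image, of g p] that by blast
  ultimately show ?thesis by (simp add: normal_inv_iff)
qed

lemma (in group) conj_nat_pow:
  assumes "a \<in> carrier G" "g \<in> carrier G"
  shows "g \<otimes> a [^] (n::nat) \<otimes> inv g = (g \<otimes> a \<otimes> inv g) [^] n"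
  using group_hom.hom_nat_pow[OF conjugation_group_hom[OF assms(2)] assms(1)] .

lemma (in group) subgroup_nat_pow_closed:
  assumes "subgroup H G" "h \<in> H"
  shows "h [^] (n::nat) \<in> H"
  using subgroup_int_pow_closed[OF assms, of "int n"] by (simp add: int_pow_int)

lemma (in group) comm_pow_subgroup_of_subgroup:
  assumes "subgroup H G"
  shows "comm_pow_subgroup (G\<lparr>carrier := H\<rparr>) p =
         generate G (derived_set G H \<union> {a [^] p | a. a \<in> H})"
proof -
  have "derived_set (G\<lparr>carrier := H\<rparr>) H = derived_set G H"
    by (rule derived_set_consistent[OF subset_refl assms])
  moreover have "{a [^]\<^bsub>G\<lparr>carrier := H\<rparr>\<^esub> p | a. a \<in> H} = {a [^] p | a. a \<in> H}"
    by (simp flip: nat_pow_consistent)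
  moreover have "derived_set G H \<union> {a [^] p | a. a \<in> H} \<subseteq> H"
    using derived_set_incl[OF subset_refl assms] subgroup_nat_pow_closed[OF assms] by blast
  ultimately show ?thesis
    unfolding comm_pow_subgroup_def using generate_consistent[OF _ assms] by simp
qed

lemma d_p_le_of_surj_hom:
  assumes "group_hom A B f" "f ` carrier A = carrier B"
    and "finite T" "T \<subseteq> carrier A"
    and "kernel A B f \<subseteq> generate A (T \<union> comm_pow_subgroup A p)"
  shows "d_p A p \<le> d_p B p + card T"
proof -
  interpret f: group_hom A B f by fact
  define PA where "PA = comm_pow_subgroup A p"
  define PB where "PB = comm_pow_subgroup B p"
  interpret PA: normal PA A
    unfolding PA_def by (rule comm_pow_subgroup_normal[OF f.G.group_axioms])
  interpret PB: normal PB B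
    unfolding PB_def by (rule comm_pow_subgroup_normal[OF f.H.group_axioms])
  have fP: "f ` PA = PB"
    unfolding PA_def PB_def by (rule comm_pow_subgroup_image[OF assms(1,2)])
  have gen_image: "generate B (f ` S \<union> PB) = f ` generate A (S \<union> PA)"
    if "S \<subseteq> carrier A" for S
    using f.generate_img[of "S \<union> PA"] that PA.subset by (simp add: image_Un fP)
  show ?thesis
  proof (cases "fin_gen (B Mod PB)")
    case True
    then obtain SB where SB: "finite SB" "SB \<subseteq> carrier B" "card SB = min_gens (B Mod PB)"
      "generate B (SB \<union> PB) = carrier B"
      by (rule PB.FactGroup_obtains_lifted_min_generators)
    obtain SA where SA: "SA \<subseteq> carrier A" "inj_on f SA" "SB = f ` SA"
      using SB(2) unfolding assms(2)[symmetric] subset_image_inj by blast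
    define S where "S = SA \<union> T"
    have S: "finite S" "S \<subseteq> carrier A"
      unfolding S_def using SA SB(1) assms(3,4) by (auto simp: finite_image_iff)
    have S_PA: "S \<union> PA \<subseteq> carrier A" using S(2) PA.subset by (rule Un_least)
    have "carrier B = f ` generate A (SA \<union> PA)"
      using SB(4) gen_image[OF SA(1)] SA(3) by simp
    also have "\<dots> \<subseteq> f ` generate A (S \<union> PA)"
      unfolding S_def by (intro image_mono f.G.mono_generate) blast
    finally have "f ` generate A (S \<union> PA) = carrier B"
      using f.G.generate_incl[OF S_PA] by auto
    moreover have "kernel A B f \<subseteq> generate A (S \<union> PA)"
      using assms(5) f.G.mono_generate[of "T \<union> PA" "S \<union> PA"] unfolding S_def PA_def by blast
    ultimately have "generate A (S \<union> PA) = carrier A"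
      by (intro f.subgroup_eq_carrier_of_image f.G.generate_is_subgroup[OF S_PA])
    then have "min_gens (A Mod PA) \<le> card S"
      by (rule PA.fin_gen_FactGroup_min_gens_le(2)[OF S])
    also have "\<dots> \<le> card SA + card T" unfolding S_def by (rule card_Un_le)
    also have "card SA = min_gens (B Mod PB)" using SA(2,3) SB(3) by (simp add: card_image)
    finally show ?thesis unfolding d_p_def PA_def PB_def .
  next
    case False
    have "\<not> fin_gen (A Mod PA)"
    proof
      assume "fin_gen (A Mod PA)"
      then obtain S where S: "finite S" "S \<subseteq> carrier A" "generate A (S \<union> PA) = carrier A"
        by (rule PA.FactGroup_obtains_lifted_min_generators)
      then have "generate B (f ` S \<union> PB) = carrier B" using gen_image assms(2) by simp
      then have "fin_gen (B Mod PB)"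
        using S(1,2) by (intro PB.fin_gen_FactGroup_min_gens_le(1)) auto
      with False show False ..
    qed
    then show ?thesis
      using False unfolding d_p_def PA_def PB_def by (simp add: min_gens_not_fin_gen)
  qed
qed

lemma (in group) normal_closure_normal:
  assumes "S \<subseteq> carrier G"
  shows "normal_closure G S \<lhd> G"
  unfolding normal_closure_def
proof (rule normal_generateI)
  show "{g \<otimes> y \<otimes> inv g | g y. g \<in> carrier G \<and> y \<in> S} \<subseteq> carrier G"
    using assms by auto
  fix h g assume h: "h \<in> {g \<otimes> y \<otimes> inv g | g y. g \<in> carrier G \<and> y \<in> S}" and g: "g \<in> carrier G"
  then obtain a y where a: "a \<in> carrier G" and y: "y \<in> S" and h_eq: "h = a \<otimes> y \<otimes> inv a"
    by blast
  have "g \<otimes> h \<otimes> inv g = (g \<otimes> a) \<otimes> y \<otimes> inv (g \<otimes> a)"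
    using a g y assms by (auto simp: h_eq inv_mult_group m_assoc)
  then show "g \<otimes> h \<otimes> inv g \<in> {g \<otimes> y \<otimes> inv g | g y. g \<in> carrier G \<and> y \<in> S}"
    using a g y by blast
qed

lemma (in group) subset_normal_closure:
  assumes "S \<subseteq> carrier G"
  shows "S \<subseteq> normal_closure G S"
proof
  fix y assume "y \<in> S"
  moreover have "y = \<one> \<otimes> y \<otimes> inv \<one>" using \<open>y \<in> S\<close> assms by auto
  ultimately show "y \<in> normal_closure G S"
    unfolding normal_closure_def by (intro generate.incl) blast
qed

lemma (in group) normal_closure_subset:
  assumes "subgroup J G" "\<And>g y. g \<in> carrier G \<Longrightarrow> y \<in> S \<Longrightarrow> g \<otimes> y \<otimes> inv g \<in> J"
  shows "normal_closure G S \<subseteq> J"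
  unfolding normal_closure_def using assms(2) by (intro generate_subgroup_incl[OF _ assms(1)]) blast

context normal
begin

lemma nat_pow_mem_iff_ord_dvd:
  assumes "x \<in> carrier G"
  shows "x [^] (m::nat) \<in> H \<longleftrightarrow> group.ord (G Mod H) (H #> x) dvd m"
proof -
  interpret P: group "G Mod H" by (rule factorgroup_is_group)
  have "H #> x \<in> carrier (G Mod H)" using assms by (simp add: carrier_FactGroup)
  then have "(H #> x) [^]\<^bsub>G Mod H\<^esub> m = \<one>\<^bsub>G Mod H\<^esub> \<longleftrightarrow> P.ord (H #> x) dvd m"
    by (rule P.pow_eq_id)
  then show ?thesis
    using assms by (simp add: FactGroup_pow rcos_eq_self_iff)
qed

lemma conj_mem_generate_conj_derived_set:
  assumes "y \<in> H" "d \<in> carrier G" "d \<otimes> y = y \<otimes> d" "v \<in> carrier G" "u \<in> H #> (d \<otimes> v)"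
  shows "inv u \<otimes> y \<otimes> u \<in> generate G ({inv v \<otimes> y \<otimes> v} \<union> derived_set G H)"
proof -
  have dv: "d \<otimes> v \<in> carrier G" using assms(2,4) by simp
  have u: "u \<in> carrier G" by (rule elemrcos_carrier[OF is_group dv assms(5)])
  have yG: "y \<in> carrier G" using assms(1) subset by blast
  define w where "w = inv u \<otimes> (d \<otimes> v)"
  define t where "t = inv v \<otimes> y \<otimes> v"
  have "u \<otimes> inv (d \<otimes> v) \<in> H" by (rule rcos_module_imp[OF is_group dv assms(5)])
  then have "inv u \<otimes> inv (u \<otimes> inv (d \<otimes> v)) \<otimes> u \<in> H"
    by (intro inv_op_closed1 u m_inv_closed)
  then have wH: "w \<in> H" unfolding w_def using u dv by (simp add: inv_mult_group m_assoc)
  have tH: "t \<in> H" unfolding t_def by (rule inv_op_closed1[OF assms(4,1)])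
  have wG: "w \<in> carrier G" and tG: "t \<in> carrier G" using wH tH subset by blast+
  have d_y: "d \<otimes> (y \<otimes> z) = y \<otimes> (d \<otimes> z)" if "z \<in> carrier G" for z
    using that assms(2,3) yG by (simp flip: m_assoc)
  \<comment> \<open>As \<open>d\<close> commutes with \<open>y\<close>, this conjugate of \<open>y\<close> is a conjugate of \<open>t\<close> by \<open>w \<in> H\<close>.\<close>
  have "inv u \<otimes> y \<otimes> u = w \<otimes> t \<otimes> inv w"
    unfolding w_def t_def using u assms(2,4) yG
    by (simp add: inv_mult_group m_assoc d_y)
  also have "\<dots> = (w \<otimes> t \<otimes> inv w \<otimes> inv t) \<otimes> t"
    using wG tG by (simp add: m_assoc)
  also have "\<dots> \<in> generate G ({t} \<union> derived_set G H)"
  proof (rule generate.eng)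
    show "w \<otimes> t \<otimes> inv w \<otimes> inv t \<in> generate G ({t} \<union> derived_set G H)"
      using wH tH by (intro generate.incl) blast
  qed (rule generate.incl, simp)
  finally show ?thesis unfolding t_def .
qed

lemma FactGroup_rcosets_representatives:
  assumes "subgroup C (G Mod H)"
  obtains R where "R \<subseteq> carrier G" "card R = card (rcosets\<^bsub>G Mod H\<^esub> C)"
    "\<And>u. u \<in> carrier G \<Longrightarrow> \<exists>v\<in>R. \<exists>c\<in>C. H #> u = c <#> (H #> v)"
proof -
  interpret P: group "G Mod H" by (rule factorgroup_is_group)
  have rcosets: "rcosets\<^bsub>G Mod H\<^esub> C = (\<lambda>g. C #>\<^bsub>G Mod H\<^esub> (H #> g)) ` carrier G"
    unfolding RCOSETS_def carrier_FactGroup by blast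
  then obtain R where R: "R \<subseteq> carrier G" "inj_on (\<lambda>g. C #>\<^bsub>G Mod H\<^esub> (H #> g)) R"
    "rcosets\<^bsub>G Mod H\<^esub> C = (\<lambda>g. C #>\<^bsub>G Mod H\<^esub> (H #> g)) ` R"
    using subset_image_inj[THEN iffD1, OF equalityD1[OF rcosets]] by blast
  have "\<exists>v\<in>R. \<exists>c\<in>C. H #> u = c <#> (H #> v)" if u: "u \<in> carrier G" for u
  proof -
    have "C #>\<^bsub>G Mod H\<^esub> (H #> u) \<in> rcosets\<^bsub>G Mod H\<^esub> C"
      unfolding rcosets using u by blast
    then obtain v where v: "v \<in> R" "C #>\<^bsub>G Mod H\<^esub> (H #> u) = C #>\<^bsub>G Mod H\<^esub> (H #> v)"
      unfolding R(3) by blast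
    have "H #> u \<in> carrier (G Mod H)" using u by (simp add: carrier_FactGroup)
    then have "H #> u \<in> C #>\<^bsub>G Mod H\<^esub> (H #> v)"
      using P.rcos_self[OF _ assms] v(2) by metis
    then show ?thesis using v(1) unfolding r_coset_def by auto
  qed
  with R show thesis using that by (simp add: card_image)
qed

lemma conjugates_of_ord_power:
  assumes "finite (rcosets H)" "x \<in> carrier G"
  defines "n \<equiv> group.ord (G Mod H) (H #> x)"
  obtains T where "finite T" "T \<subseteq> H" "card T * n \<le> card (rcosets H)"
    "\<And>g. g \<in> carrier G \<Longrightarrow> g \<otimes> x [^] n \<otimes> inv g \<in> generate G (T \<union> derived_set G H)"
proof -
  interpret P: group "G Mod H" by (rule factorgroup_is_group)
  define y where "y = x [^] n"
  define C where "C = generate (G Mod H) {H #> x}"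
  have xi: "H #> x \<in> carrier (G Mod H)" using assms(2) by (simp add: carrier_FactGroup)
  have yH: "y \<in> H" unfolding y_def n_def using nat_pow_mem_iff_ord_dvd[OF assms(2)] by simp
  have C: "subgroup C (G Mod H)" unfolding C_def by (rule P.generate_is_subgroup) (use xi in simp)
  have "card C = n" unfolding C_def n_def by (rule P.generate_pow_card[OF xi, symmetric])
  then have index: "card (rcosets\<^bsub>G Mod H\<^esub> C) * n = card (rcosets H)"
    using P.lagrange[OF C] by (simp add: order_def FactGroup_def)
  obtain R where R: "R \<subseteq> carrier G" "card R = card (rcosets\<^bsub>G Mod H\<^esub> C)"
    "\<And>u. u \<in> carrier G \<Longrightarrow> \<exists>v\<in>R. \<exists>c\<in>C. H #> u = c <#> (H #> v)"
    using FactGroup_rcosets_representatives[OF C] by blast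
  define T where "T = (\<lambda>v. inv v \<otimes> y \<otimes> v) ` R"
  have "card (rcosets H) \<noteq> 0"
    using assms(1) subgroup_in_rcosets[OF is_group] by auto
  then have "card R \<noteq> 0" using R(2) index by (metis mult_is_0)
  then have "finite R" by (metis card.infinite)
  then have "finite T" unfolding T_def by simp
  moreover have "T \<subseteq> H" unfolding T_def using R(1) yH by (auto intro: inv_op_closed1)
  moreover have "card T * n \<le> card R * n"
    unfolding T_def using card_image_le[OF \<open>finite R\<close>] by (rule mult_le_mono1)
  then have "card T * n \<le> card (rcosets H)" using R(2) index by simp
  moreover have "g \<otimes> y \<otimes> inv g \<in> generate G (T \<union> derived_set G H)" if g: "g \<in> carrier G" for g
  proof -
    obtain v c where v: "v \<in> R" and c: "c \<in> C" and coset: "H #> inv g = c <#> (H #> v)"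
      using R(3)[of "inv g"] g by blast
    obtain j :: int where "c = (H #> x) [^]\<^bsub>G Mod H\<^esub> j"
      using c unfolding C_def P.generate_pow[OF xi] by blast
    then have "c = H #> x [^] j" by (simp add: FactGroup_int_pow[OF assms(2)])
    then have "H #> inv g = H #> (x [^] j \<otimes> v)"
      using coset R(1) v assms(2) by (simp add: rcos_sum subsetD)
    then have "inv g \<in> H #> (x [^] j \<otimes> v)"
      using rcos_self[OF _ subgroup_axioms, of "inv g"] g by simp
    moreover have "x [^] j \<otimes> y = y \<otimes> x [^] j"
      unfolding y_def using assms(2)
      by (simp add: int_pow_int[symmetric] int_pow_mult[symmetric] add.commute)
    ultimately have "inv (inv g) \<otimes> y \<otimes> inv g \<in> generate G ({inv v \<otimes> y \<otimes> v} \<union> derived_set G H)"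
      using assms(2) R(1) v by (intro conj_mem_generate_conj_derived_set[OF yH]) auto
    also have "\<dots> \<subseteq> generate G (T \<union> derived_set G H)"
      unfolding T_def using v by (intro mono_generate) blast
    finally show ?thesis using g by simp
  qed
  ultimately show thesis using that unfolding y_def by blast
qed

lemma conjugates_of_prime_power_power:
  assumes "Factorial_Ring.prime p" "finite (rcosets H)" "x \<in> carrier G" "x [^] (p ^ k) \<in> H"
  obtains T where "finite T" "T \<subseteq> H" "card T * p ^ k \<le> card (rcosets H)"
    "\<And>g. g \<in> carrier G \<Longrightarrow>
       g \<otimes> x [^] (p ^ k) \<otimes> inv g \<in> generate G (T \<union> (derived_set G H \<union> {a [^] p | a. a \<in> H}))"
proof -
  define n where "n = group.ord (G Mod H) (H #> x)"
  have "n dvd p ^ k" unfolding n_def using nat_pow_mem_iff_ord_dvd[OF assms(3)] assms(4) by simp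
  then obtain i where i: "i \<le> k" "n = p ^ i"
    unfolding divides_primepow_nat[OF assms(1)] by (elim exE conjE)
  show thesis
  proof (cases "i = k")
    case True
    then have ord: "group.ord (G Mod H) (H #> x) = p ^ k" using i(2) n_def by simp
    obtain T where T: "finite T" "T \<subseteq> H"
      "card T * group.ord (G Mod H) (H #> x) \<le> card (rcosets H)"
      "\<And>g. g \<in> carrier G \<Longrightarrow>
         g \<otimes> x [^] group.ord (G Mod H) (H #> x) \<otimes> inv g \<in> generate G (T \<union> derived_set G H)"
      by (rule conjugates_of_ord_power[OF assms(2,3)], rule that)
    show thesis
    proof (rule that[OF T(1,2)])
      show "card T * p ^ k \<le> card (rcosets H)" using T(3) ord by simp
      have "generate G (T \<union> derived_set G H) \<subseteq>
            generate G (T \<union> (derived_set G H \<union> {a [^] p | a. a \<in> H}))"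
        by (rule mono_generate) blast
      then show "g \<otimes> x [^] (p ^ k) \<otimes> inv g \<in> generate G (T \<union> (derived_set G H \<union> {a [^] p | a. a \<in> H}))"
        if "g \<in> carrier G" for g
        using T(4)[OF that] ord by auto
    qed
  next
    case False
    \<comment> \<open>Then already \<open>x [^] p ^ i\<close> lies in \<open>H\<close>, so every conjugate of \<open>x [^] p ^ k\<close> is a \<open>p\<close>-th power in \<open>H\<close>.\<close>
    define m where "m = p ^ (k - Suc i)"
    have "k = i + (k - Suc i) + 1" using i(1) False by simp
    then have pk: "p ^ k = p ^ i * (m * p)"
      unfolding m_def by (metis power_add power_one_right mult.assoc)
    have xi: "x [^] (p ^ i) \<in> H" using nat_pow_mem_iff_ord_dvd[OF assms(3)] i(2) n_def by simp
    show thesis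
    proof (rule that[of "{}"])
      fix g assume g: "g \<in> carrier G"
      define z where "z = g \<otimes> x [^] (p ^ i) \<otimes> inv g"
      have zH: "z \<in> H" unfolding z_def by (rule inv_op_closed2[OF g xi])
      have "x [^] (p ^ k) = (x [^] (p ^ i)) [^] (m * p)"
        unfolding pk using assms(3) by (rule nat_pow_pow[symmetric])
      then have "g \<otimes> x [^] (p ^ k) \<otimes> inv g = z [^] (m * p)"
        unfolding z_def using conj_nat_pow[OF _ g] assms(3) by simp
      also have "\<dots> = (z [^] m) [^] p" using zH subset by (simp add: nat_pow_pow subsetD)
      also have "\<dots> \<in> generate G ({} \<union> (derived_set G H \<union> {a [^] p | a. a \<in> H}))"
        using subgroup_nat_pow_closed[OF subgroup_axioms zH, of m] by (intro generate.incl) auto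
      finally show "g \<otimes> x [^] (p ^ k) \<otimes> inv g \<in> generate G ({} \<union> (derived_set G H \<union> {a [^] p | a. a \<in> H}))" .
    qed simp_all
  qed
qed

lemma normal_closure_prime_power_power_generators:
  assumes "Factorial_Ring.prime p" "finite (rcosets H)" "x \<in> carrier G" "x [^] (p ^ k) \<in> H"
  obtains T where "finite T" "T \<subseteq> H" "card T * p ^ k \<le> card (rcosets H)"
    "normal_closure G {x [^] (p ^ k)} \<subseteq>
       generate (G\<lparr>carrier := H\<rparr>) (T \<union> comm_pow_subgroup (G\<lparr>carrier := H\<rparr>) p)"
proof -
  let ?\<Phi> = "derived_set G H \<union> {a [^] p | a. a \<in> H}"
  obtain T where T: "finite T" "T \<subseteq> H" "card T * p ^ k \<le> card (rcosets H)"
    "\<And>g. g \<in> carrier G \<Longrightarrow> g \<otimes> x [^] (p ^ k) \<otimes> inv g \<in> generate G (T \<union> ?\<Phi>)"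
    by (rule conjugates_of_prime_power_power[OF assms], rule that)
  have \<Phi>: "?\<Phi> \<subseteq> H"
    using derived_set_incl[OF subset_refl subgroup_axioms]
      subgroup_nat_pow_closed[OF subgroup_axioms] by blast
  have "normal_closure G {x [^] (p ^ k)} \<subseteq> generate G (T \<union> ?\<Phi>)"
    using T(2,4) \<Phi> subset by (intro normal_closure_subset generate_is_subgroup) auto
  also have "\<dots> = generate (G\<lparr>carrier := H\<rparr>) (T \<union> ?\<Phi>)"
    using T(2) \<Phi> by (intro generate_consistent[symmetric] subgroup_axioms) blast
  also have "\<dots> \<subseteq> generate (G\<lparr>carrier := H\<rparr>) (T \<union> comm_pow_subgroup (G\<lparr>carrier := H\<rparr>) p)"
  proof (rule group.mono_generate[OF subgroup_imp_group[OF subgroup_axioms]])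
    have "?\<Phi> \<subseteq> generate G ?\<Phi>" using generate.incl[of _ ?\<Phi> G] by blast
    then show "T \<union> ?\<Phi> \<subseteq> T \<union> comm_pow_subgroup (G\<lparr>carrier := H\<rparr>) p"
      unfolding comm_pow_subgroup_of_subgroup[OF subgroup_axioms] by blast
  qed
  finally show thesis using that T(1-3) by blast
qed

lemma FactGroup_normal_preimage:
  assumes "K \<lhd> G Mod H"
  shows "{g \<in> carrier G. H #> g \<in> K} \<lhd> G"
    and "card (rcosets {g \<in> carrier G. H #> g \<in> K}) = card (rcosets\<^bsub>G Mod H\<^esub> K)"
proof -
  interpret P: group "G Mod H" by (rule factorgroup_is_group)
  interpret K: normal K "G Mod H" by fact
  interpret PK: group "G Mod H Mod K" by (rule K.factorgroup_is_group)
  define \<phi> where "\<phi> = (\<lambda>Z. K #>\<^bsub>G Mod H\<^esub> Z) \<circ> (#>) H"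
  have "\<phi> \<in> hom G (G Mod H Mod K)"
    unfolding \<phi>_def by (rule Group.hom_compose[OF r_coset_hom_Mod K.r_coset_hom_Mod])
  then interpret \<phi>: group_hom G "G Mod H Mod K" \<phi>
    by (simp add: group_hom_def group_hom_axioms_def is_group PK.group_axioms)
  have surj: "\<phi> ` carrier G = carrier (G Mod H Mod K)"
    unfolding \<phi>_def carrier_FactGroup image_comp ..
  have ker: "kernel G (G Mod H Mod K) \<phi> = {g \<in> carrier G. H #> g \<in> K}"
    unfolding kernel_def \<phi>_def using K.rcos_eq_self_iff by (auto simp: carrier_FactGroup)
  show "{g \<in> carrier G. H #> g \<in> K} \<lhd> G"
    unfolding ker[symmetric] by (rule \<phi>.normal_kernel)
  have "order (G Mod kernel G (G Mod H Mod K) \<phi>) = order (G Mod H Mod K)"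
    by (rule iso_same_order[OF \<phi>.FactGroup_iso_set[OF surj]])
  then show "card (rcosets {g \<in> carrier G. H #> g \<in> K}) = card (rcosets\<^bsub>G Mod H\<^esub> K)"
    unfolding ker by (simp add: order_def FactGroup_def)
qed

lemma rcos_group_hom_preimage:
  assumes "subgroup K (G Mod H)"
  defines "L \<equiv> {g \<in> carrier G. H #> g \<in> K}"
  assumes "subgroup L G"
  shows "group_hom (G\<lparr>carrier := L\<rparr>) ((G Mod H)\<lparr>carrier := K\<rparr>) ((#>) H)"
    and "(#>) H ` L = K"
    and "kernel (G\<lparr>carrier := L\<rparr>) ((G Mod H)\<lparr>carrier := K\<rparr>) ((#>) H) = H"
proof -
  interpret P: group "G Mod H" by (rule factorgroup_is_group)
  have "(#>) H \<in> hom (G\<lparr>carrier := L\<rparr>) ((G Mod H)\<lparr>carrier := K\<rparr>)"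
    unfolding L_def by (rule homI) (auto simp: rcos_sum)
  then show "group_hom (G\<lparr>carrier := L\<rparr>) ((G Mod H)\<lparr>carrier := K\<rparr>) ((#>) H)"
    using subgroup_imp_group[OF assms(3)] P.subgroup_imp_group[OF assms(1)]
    by (simp add: group_hom_def group_hom_axioms_def)
  have "K \<subseteq> (#>) H ` carrier G"
    using subgroup.subset[OF assms(1)] by (simp add: carrier_FactGroup)
  then show "(#>) H ` L = K" unfolding L_def by blast
  have "H \<subseteq> L"
    unfolding L_def using subgroup.one_closed[OF assms(1)] rcos_const[OF is_group] subset by auto
  then show "kernel (G\<lparr>carrier := L\<rparr>) ((G Mod H)\<lparr>carrier := K\<rparr>) ((#>) H) = H"
    unfolding kernel_def L_def using rcos_eq_self_iff subset by auto
qed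

end

definition rg_ratio :: "('a, 'b) monoid_scheme \<Rightarrow> nat \<Rightarrow> 'a set \<Rightarrow> real" where
  "rg_ratio G p H = (real (d_p (G\<lparr>carrier := H\<rparr>) p) - 1) / real (card (rcosets\<^bsub>G\<^esub> H))"

lemma RG_p_eq_Inf_rg_ratio:
  "RG_p G p = Inf {rg_ratio G p H | H. H \<lhd> G \<and> p_power_index G p H}"
  unfolding RG_p_def rg_ratio_def ..

lemma rg_ratio_ge_minus_one: "- 1 \<le> rg_ratio G p H"
  unfolding rg_ratio_def by (cases "card (rcosets\<^bsub>G\<^esub> H) = 0") (simp_all add: le_divide_eq)

lemma RG_p_diff_le_of_rg_ratio_bounds:
  assumes "group Q"
    and "\<And>K. K \<lhd> Q \<Longrightarrow> p_power_index Q p K \<Longrightarrow>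
           \<exists>H. H \<lhd> G \<and> p_power_index G p H \<and> rg_ratio G p H - c \<le> rg_ratio Q p K"
  shows "RG_p G p - c \<le> RG_p Q p"
proof -
  have "carrier Q \<lhd> Q" by (rule group.normal_self[OF assms(1)])
  moreover have "rcosets\<^bsub>Q\<^esub> carrier Q = {carrier Q}"
    using subgroup.rcos_const[OF group.subgroup_self[OF assms(1)] assms(1)] monoid.one_closed[OF group.is_monoid[OF assms(1)]]
    unfolding RCOSETS_def by blast
  then have "p_power_index Q p (carrier Q)"
    unfolding p_power_index_def by (simp add: exI[of _ 0])
  ultimately have nonempty: "{rg_ratio Q p K | K. K \<lhd> Q \<and> p_power_index Q p K} \<noteq> {}"
    by blast
  have bdd: "bdd_below {rg_ratio G p H | H. H \<lhd> G \<and> p_power_index G p H}"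
    using rg_ratio_ge_minus_one by (intro bdd_belowI) blast
  show ?thesis
    unfolding RG_p_eq_Inf_rg_ratio
  proof (rule cInf_greatest[OF nonempty])
    fix v assume "v \<in> {rg_ratio Q p K | K. K \<lhd> Q \<and> p_power_index Q p K}"
    then obtain K where K: "K \<lhd> Q" "p_power_index Q p K" "v = rg_ratio Q p K" by blast
    then obtain H where H: "H \<lhd> G" "p_power_index G p H" "rg_ratio G p H - c \<le> v"
      using assms(2) by blast
    have "Inf {rg_ratio G p H | H. H \<lhd> G \<and> p_power_index G p H} \<le> rg_ratio G p H"
      using H(1,2) by (intro cInf_lower[OF _ bdd]) blast
    then show "Inf {rg_ratio G p H | H. H \<lhd> G \<and> p_power_index G p H} - c \<le> v"
      using H(3) by linarith
  qed
qed

lemma rank_ratio_shift: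
  fixes a b t q i :: nat
  assumes "a \<le> b + t" "t * q \<le> i" "0 < q" "0 < i"
  shows "(real a - 1) / real i - 1 / real q \<le> (real b - 1) / real i"
proof -
  have "real t / real i \<le> 1 / real q"
    using assms(2-4) by (simp add: divide_simps flip: of_nat_mult)
  moreover have "(real a - 1) / real i \<le> (real b - 1) / real i + real t / real i"
    using assms(1,4) by (simp add: divide_simps)
  ultimately show ?thesis by linarith
qed

lemma (in group) rg_ratio_FactGroup_normal_closure_bound:
  assumes "Factorial_Ring.prime p" "x \<in> carrier G"
    and "K \<lhd> G Mod normal_closure G {x [^] (p ^ k)}"
    and "p_power_index (G Mod normal_closure G {x [^] (p ^ k)}) p K"
  obtains L where "L \<lhd> G" "p_power_index G p L"
    "rg_ratio G p L - 1 / real p ^ k \<le> rg_ratio (G Mod normal_closure G {x [^] (p ^ k)}) p K"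
proof -
  define N where "N = normal_closure G {x [^] (p ^ k)}"
  define L where "L = {g \<in> carrier G. N #> g \<in> K}"
  have y: "{x [^] (p ^ k)} \<subseteq> carrier G" using assms(2) by simp
  interpret N: normal N G unfolding N_def by (rule normal_closure_normal[OF y])
  have L: "L \<lhd> G" "card (rcosets L) = card (rcosets\<^bsub>G Mod N\<^esub> K)"
    using N.FactGroup_normal_preimage[OF assms(3)[folded N_def]] unfolding L_def by blast+
  interpret L: normal L G by (rule L(1))
  obtain e where e: "card (rcosets L) = p ^ e"
    using assms(4) L(2) unfolding p_power_index_def N_def by auto
  have index_pos: "0 < card (rcosets L)" using e prime_gt_0_nat[OF assms(1)] by simp
  then have L_index: "p_power_index G p L"
    unfolding p_power_index_def using e card_ge_0_finite by blast
  define A where "A = G\<lparr>carrier := L\<rparr>"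
  define B where "B = (G Mod N)\<lparr>carrier := K\<rparr>"
  note f = N.rcos_group_hom_preimage[OF normal_imp_subgroup[OF assms(3)[folded N_def]],
      folded L_def, OF L.subgroup_axioms, folded A_def B_def]
  have "N \<subseteq> L" using f(3) unfolding kernel_def A_def by auto
  moreover have "x [^] (p ^ k) \<in> N" using subset_normal_closure[OF y] unfolding N_def by blast
  ultimately obtain T where T: "finite T" "T \<subseteq> L" "card T * p ^ k \<le> card (rcosets L)"
    "N \<subseteq> generate A (T \<union> comm_pow_subgroup A p)"
    using L.normal_closure_prime_power_power_generators[OF assms(1) _ assms(2)]
      card_ge_0_finite[OF index_pos] unfolding N_def A_def by blast
  have "d_p A p \<le> d_p B p + card T"
    using f(2,3) T(1,2,4) by (intro d_p_le_of_surj_hom[OF f(1)]) (simp_all add: A_def B_def)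
  then have "rg_ratio G p L - 1 / real (p ^ k) \<le> rg_ratio (G Mod N) p K"
    unfolding rg_ratio_def A_def B_def L(2)[symmetric]
    using T(3) index_pos prime_gt_0_nat[OF assms(1)] by (intro rank_ratio_shift) simp_all
  then show thesis using that L(1) L_index unfolding N_def by simp
qed

theorem theorem3p2:
  fixes G :: "('a, 'b) monoid_scheme" and p k :: nat and x :: 'a
  assumes "group G" and "fin_gen G" and "Factorial_Ring.prime p" and "x \<in> carrier G"
  shows "RG_p (G Mod normal_closure G {x [^]\<^bsub>G\<^esub> (p ^ k)}) p \<ge> RG_p G p - 1 / real p ^ k"
proof (rule RG_p_diff_le_of_rg_ratio_bounds)
  interpret group G by fact
  have "normal_closure G {x [^]\<^bsub>G\<^esub> (p ^ k)} \<lhd> G"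
    using assms(4) by (intro normal_closure_normal) simp
  then show "group (G Mod normal_closure G {x [^]\<^bsub>G\<^esub> (p ^ k)})"
    by (rule normal.factorgroup_is_group)
  fix K assume K: "K \<lhd> G Mod normal_closure G {x [^]\<^bsub>G\<^esub> (p ^ k)}"
    "p_power_index (G Mod normal_closure G {x [^]\<^bsub>G\<^esub> (p ^ k)}) p K"
  obtain L where "L \<lhd> G" "p_power_index G p L"
    "rg_ratio G p L - 1 / real p ^ k \<le> rg_ratio (G Mod normal_closure G {x [^]\<^bsub>G\<^esub> (p ^ k)}) p K"
    by (rule rg_ratio_FactGroup_normal_closure_bound[OF assms(3,4) K])
  then show "\<exists>L. L \<lhd> G \<and> p_power_index G p L \<and> rg_ratio G p L - 1 / real p ^ k \<le>
               rg_ratio (G Mod normal_closure G {x [^]\<^bsub>G\<^esub> (p ^ k)}) p K"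
    by blast
qed

end
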